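(* Let $\mathcal V$ be a finite set of variables, $\mathcal P$ a finite set of labels, and $\mathcal C$ a finite set of nonempty subsets of $\mathcal V$. For each $C\in\mathcal C$ let $\mathcal D_C\subseteq\mathcal P^C$ and $\hat\theta_{C,\vec d}\le0$ for $\vec d\in\mathcal D_C$, and suppose every potential is permuted $\mathcal P^n$-Potts: for all $C\in\mathcal C$, all $\vec d',\vec d''\in\mathcal D_C$ with $\vec d'\ne\vec d''$, and all $i\in C$, we have $d'_i\ne d''_i$. Let $$E^*_I(\vec y,\vec z)=-\sum_{C\in\mathcal C}\sum_{\vec d\in\mathcal D_C}\hat\theta_{C,\vec d}\Big((|C|-1)z_{C,\vec d}-\sum_{\ell\in C}y_{\ell d_\ell}z_{C,\vec d}\Big)$$ for binary $y_{ip}$ ($i\in\mathcal V,p\in\mathcal P$) and $z_{C,\vec d}$, and $D(\vec\lambda)=\min_{\vec y,\vec z\text{ binary}}\big(E^*_I(\vec y,\vec z)+\sum_{i\in\mathcal V}\lambda_i(\sum_{p}y_{ip}-1)\big)$ for $\vec\lambda\in\mathbb R^{\mathcal V}$. Then $\max_{\vec\lambda}D(\vec\lambda)$ equals the optimal value of the linear program in variables $y_{ip}\in[0,1]$ ($i\in\mathcal V,p\in\mathcal P$) and $y_{C,\vec p}\in[0,1]$ ($C\in\mathcal C$, $\vec p\in\mathcal P^C$): $$\min\ \sum_{C\in\mathcal C}\sum_{\vec d\in\mathcal D_C}\hat\theta_{C,\vec d}\,y_{C,\vec d}$$ subject to $y_{C,\vec d}\le y_{\ell d_\ell}$ for all $C\in\mathcal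 C,\vec d\in\mathcal D_C,\ell\in C$; $\sum_{p\in\mathcal P}y_{ip}=1$ for all $i\in\mathcal V$; and $\sum_{\vec p\in\mathcal P^C:\,p_\ell=p_0}y_{C,\vec p}=y_{\ell p_0}$ for all $C\in\mathcal C$, $p_0\in\mathcal P$, $\ell\in C$.
   Context: The potentials are sparse pattern-based: $\theta_C(\vec x_C)=\hat\theta_{C,\vec d}$ if $\vec x_C=\vec d\in\mathcal D_C$ and $0$ otherwise, and the energy is $E(\vec x)=\sum_{C}\theta_C(\vec x_C)$. A labeling $\vec p\in\mathcal P^C$ is a map $C\to\mathcal P$ with value $p_\ell$ at $\ell\in C$. $D$ is the Lagrangian dual of the submodular relaxation obtained by relaxing the consistency constraints $\sum_p y_{ip}=1$. *)

theory Defs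
  imports Complex_Main "HOL-Library.FuncSet"
begin

text \<open>Labelings of a clique C are extensional maps (PiE C (%_. P)) (value undefined outside C).
  y :: 'v \<Rightarrow> 'p \<Rightarrow> real are the unary variables y_{ip};
  z / yC :: 'v set \<Rightarrow> ('v \<Rightarrow> 'p) \<Rightarrow> real are the clique variables.\<close>

definition Estar ::
  "'v set set \<Rightarrow> ('v set \<Rightarrow> ('v \<Rightarrow> 'p) set) \<Rightarrow> ('v set \<Rightarrow> ('v \<Rightarrow> 'p) \<Rightarrow> real)
   \<Rightarrow> ('v \<Rightarrow> 'p \<Rightarrow> real) \<Rightarrow> ('v set \<Rightarrow> ('v \<Rightarrow> 'p) \<Rightarrow> real) \<Rightarrow> real" where
  "Estar Cs D th y z =
     - (\<Sum>C\<in>Cs. \<Sum>d\<in>D C. th C d *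
          ((real (card C) - 1) * z C d - (\<Sum>l\<in>C. y l (d l) * z C d)))"

definition binary_y :: "'v set \<Rightarrow> 'p set \<Rightarrow> ('v \<Rightarrow> 'p \<Rightarrow> real) \<Rightarrow> bool" where
  "binary_y V P y \<longleftrightarrow> (\<forall>i\<in>V. \<forall>p\<in>P. y i p \<in> {0, 1})"

definition binary_z ::
  "'v set set \<Rightarrow> ('v set \<Rightarrow> ('v \<Rightarrow> 'p) set) \<Rightarrow> ('v set \<Rightarrow> ('v \<Rightarrow> 'p) \<Rightarrow> real) \<Rightarrow> bool" where
  "binary_z Cs D z \<longleftrightarrow> (\<forall>C\<in>Cs. \<forall>d\<in>D C. z C d \<in> {0, 1})"

text \<open>Lagrangian dual D(lambda): minimum over binary y, z (a finite nonempty set of values).\<close>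
definition dual_fun ::
  "'v set \<Rightarrow> 'p set \<Rightarrow> 'v set set \<Rightarrow> ('v set \<Rightarrow> ('v \<Rightarrow> 'p) set)
   \<Rightarrow> ('v set \<Rightarrow> ('v \<Rightarrow> 'p) \<Rightarrow> real) \<Rightarrow> ('v \<Rightarrow> real) \<Rightarrow> real" where
  "dual_fun V P Cs D th lam =
     Inf {Estar Cs D th y z + (\<Sum>i\<in>V. lam i * ((\<Sum>p\<in>P. y i p) - 1)) | y z.
            binary_y V P y \<and> binary_z Cs D z}"

definition lp_feasible ::
  "'v set \<Rightarrow> 'p set \<Rightarrow> 'v set set \<Rightarrow> ('v set \<Rightarrow> ('v \<Rightarrow> 'p) set)
   \<Rightarrow> ('v \<Rightarrow> 'p \<Rightarrow> real) \<Rightarrow> ('v set \<Rightarrow> ('v \<Rightarrow> 'p) \<Rightarrow> real) \<Rightarrow> bool" where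
  "lp_feasible V P Cs D y yC \<longleftrightarrow>
     (\<forall>i\<in>V. \<forall>p\<in>P. 0 \<le> y i p \<and> y i p \<le> 1) \<and>
     (\<forall>C\<in>Cs. \<forall>p\<in>C \<rightarrow>\<^sub>E P. 0 \<le> yC C p \<and> yC C p \<le> 1) \<and>
     (\<forall>C\<in>Cs. \<forall>d\<in>D C. \<forall>l\<in>C. yC C d \<le> y l (d l)) \<and>
     (\<forall>i\<in>V. (\<Sum>p\<in>P. y i p) = 1) \<and>
     (\<forall>C\<in>Cs. \<forall>p0\<in>P. \<forall>l\<in>C. (\<Sum>p\<in>{p \<in> C \<rightarrow>\<^sub>E P. p l = p0}. yC C p) = y l p0)"

definition lp_obj ::
  "'v set set \<Rightarrow> ('v set \<Rightarrow> ('v \<Rightarrow> 'p) set) \<Rightarrow> ('v set \<Rightarrow> ('v \<Rightarrow> 'p) \<Rightarrow> real)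
   \<Rightarrow> ('v set \<Rightarrow> ('v \<Rightarrow> 'p) \<Rightarrow> real) \<Rightarrow> real" where
  "lp_obj Cs D th yC = (\<Sum>C\<in>Cs. \<Sum>d\<in>D C. th C d * yC C d)"

end

theory Submission
  imports Defs "HOL-Analysis.Henstock_Kurzweil_Integration"
begin

text \<open>Minimising E*_I over z for fixed binary y (with nonpositive weights) gives the energy
  of the labeling encoded by y, so D(lambda) is the minimum of a Lagrangian over the finite set X of
  binary y.  By LP duality (Farkas' lemma) max D equals the minimum of the expected energy over
  probability distributions on X whose mean satisfies the relaxed constraints.  This equals the LP
  value: a mixture of binary labelings gives unary marginals y, and because Potts patterns disagree
  at every variable, each clique admits a joint distribution with these marginals that gives each
  pattern d its full mass min_l y_l(d_l), which bounds the LP from above; conversely, threshold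
  rounding writes the fractional Lagrangian of an LP solution as an average of binary Lagrangians,
  each at least D(lambda).\<close>

definition dot_on :: "'i set \<Rightarrow> ('i \<Rightarrow> real) \<Rightarrow> ('i \<Rightarrow> real) \<Rightarrow> real" where
  "dot_on I u w = (\<Sum>i\<in>I. u i * w i)"

lemma dot_on_diff_left:
  "dot_on I (\<lambda>i. s * u i - t * w i) v = s * dot_on I u v - t * dot_on I w v"
  by (simp add: dot_on_def sum_subtractf sum_distrib_left algebra_simps)

lemma dot_on_diff_right:
  "dot_on I v (\<lambda>i. s * u i - t * w i) = s * dot_on I v u - t * dot_on I v w"
  by (simp add: dot_on_def sum_subtractf sum_distrib_left algebra_simps)

lemma dot_on_self_neg:
  assumes "finite I" "i0 \<in> I" "c i0 \<noteq> 0"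
  shows "dot_on I (\<lambda>i. - c i) c < 0"
proof -
  have "c i0 * c i0 \<le> (\<Sum>i\<in>I. c i * c i)"
    by (rule member_le_sum) (use assms in auto)
  moreover have "0 < c i0 * c i0"
    using assms(3) by (metis not_real_square_gt_zero)
  ultimately show ?thesis by (simp add: dot_on_def sum_negf)
qed

text \<open>Fourier--Motzkin step: a certificate y with y\<cdot>A j < 0 is used to eliminate the generator
  A j; a conic representation of the projected system lifts back to one of the original system.\<close>

lemma conic_combination_lift:
  assumes fin: "finite G" "j \<notin> G"
    and s: "s = dot_on I y (A j)" "s < 0"
    and yG: "\<forall>k\<in>G. 0 \<le> dot_on I y (A k)" and yc: "dot_on I y c < 0"
    and \<mu>: "\<forall>k\<in>G. 0 \<le> \<mu> k"
      "\<forall>i\<in>I. (\<Sum>k\<in>G. \<mu> k * (s * A k i - dot_on I y (A k) * A j i)) = s * c i - dot_on I y c * A j i"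
  shows "\<exists>\<mu>'. (\<forall>k\<in>insert j G. 0 \<le> \<mu>' k) \<and> (\<forall>i\<in>I. (\<Sum>k\<in>insert j G. \<mu>' k * A k i) = c i)"
proof -
  define \<mu>j where "\<mu>j = (dot_on I y c - (\<Sum>k\<in>G. \<mu> k * dot_on I y (A k))) / s"
  have "0 \<le> (\<Sum>k\<in>G. \<mu> k * dot_on I y (A k))"
    using \<mu>(1) yG by (intro sum_nonneg) auto
  then have \<mu>j_nonneg: "0 \<le> \<mu>j"
    unfolding \<mu>j_def using s yc by (intro divide_nonpos_neg) auto
  define \<mu>' where "\<mu>' = \<mu>(j := \<mu>j)"
  have "(\<Sum>k\<in>insert j G. \<mu>' k * A k i) = c i" if i: "i \<in> I" for i
  proof -
    have G_part: "(\<Sum>k\<in>G. \<mu>' k * A k i) = (\<Sum>k\<in>G. \<mu> k * A k i)"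
      using fin(2) by (intro sum.cong) (auto simp: \<mu>'_def)
    have "s * (\<Sum>k\<in>G. \<mu> k * A k i) - (\<Sum>k\<in>G. \<mu> k * dot_on I y (A k)) * A j i
        = s * c i - dot_on I y c * A j i"
      using \<mu>(2) i by (simp add: sum_subtractf sum_distrib_left sum_distrib_right algebra_simps)
    then have "s * c i = s * ((\<Sum>k\<in>G. \<mu> k * A k i) + \<mu>j * A j i)"
      using s(2) unfolding \<mu>j_def by (simp add: field_simps)
    then show ?thesis
      using s(2) fin G_part by (simp add: \<mu>'_def)
  qed
  moreover have "\<forall>k\<in>insert j G. 0 \<le> \<mu>' k"
    using \<mu>(1) \<mu>j_nonneg by (auto simp: \<mu>'_def)
  ultimately show ?thesis by blast
qed

lemma separating_certificate_lift:
  assumes s: "s = dot_on I y (A j)"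
    and y'G: "\<forall>k\<in>G. 0 \<le> dot_on I y' (\<lambda>i. s * A k i - dot_on I y (A k) * A j i)"
    and y'c: "dot_on I y' (\<lambda>i. s * c i - dot_on I y c * A j i) < 0"
  shows "\<exists>z. (\<forall>k\<in>insert j G. 0 \<le> dot_on I z (A k)) \<and> dot_on I z c < 0"
proof -
  define z where "z = (\<lambda>i. s * y' i - dot_on I y' (A j) * y i)"
  have "dot_on I z (A k) = dot_on I y' (\<lambda>i. s * A k i - dot_on I y (A k) * A j i)" for k
    unfolding z_def dot_on_diff_left dot_on_diff_right s by simp
  moreover have "dot_on I z (A j) = 0"
    unfolding z_def dot_on_diff_left s by simp
  moreover have "dot_on I z c = dot_on I y' (\<lambda>i. s * c i - dot_on I y c * A j i)"
    unfolding z_def dot_on_diff_left dot_on_diff_right s by simp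
  ultimately show ?thesis
    using y'G y'c by (intro exI[of _ z]) auto
qed

lemma farkas_lemma:
  assumes "finite I" "finite G"
  shows "(\<exists>\<mu>. (\<forall>j\<in>G. 0 \<le> \<mu> j) \<and> (\<forall>i\<in>I. (\<Sum>j\<in>G. \<mu> j * A j i) = c i))
       \<or> (\<exists>y. (\<forall>j\<in>G. 0 \<le> dot_on I y (A j)) \<and> dot_on I y c < 0)"
  using assms(2)
proof (induction G arbitrary: A c rule: finite_induct)
  case empty
  show ?case
    using dot_on_self_neg[OF assms(1)] by (cases "\<forall>i\<in>I. c i = 0") auto
next
  case (insert j G)
  from insert.IH[of A c] show ?case
  proof (elim disjE exE conjE)
    fix \<mu> assume "\<forall>k\<in>G. 0 \<le> \<mu> k" "\<forall>i\<in>I. (\<Sum>k\<in>G. \<mu> k * A k i) = c i"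
    moreover have "(\<Sum>k\<in>insert j G. (\<mu>(j := 0)) k * A k i) = (\<Sum>k\<in>G. \<mu> k * A k i)" for i
      using insert.hyps by (simp, intro sum.cong) auto
    ultimately show ?case
      by (intro disjI1 exI[of _ "\<mu>(j := 0)"]) auto
  next
    fix y assume yG: "\<forall>k\<in>G. 0 \<le> dot_on I y (A k)" and yc: "dot_on I y c < 0"
    show ?case
    proof (cases "0 \<le> dot_on I y (A j)")
      case True
      then show ?thesis using yG yc by auto
    next
      case False
      define s where "s = dot_on I y (A j)"
      have s_neg: "s < 0" using False s_def by simp
      define A' where "A' = (\<lambda>k i. s * A k i - dot_on I y (A k) * A j i)"
      define c' where "c' = (\<lambda>i. s * c i - dot_on I y c * A j i)"
      from insert.IH[of A' c'] show ?thesis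
      proof (elim disjE exE conjE)
        fix \<mu> assume "\<forall>k\<in>G. 0 \<le> \<mu> k" "\<forall>i\<in>I. (\<Sum>k\<in>G. \<mu> k * A' k i) = c' i"
        then show ?thesis
          using conic_combination_lift[OF insert.hyps s_def s_neg yG yc, of \<mu>]
          unfolding A'_def c'_def by blast
      next
        fix y' assume "\<forall>k\<in>G. 0 \<le> dot_on I y' (A' k)" "dot_on I y' c' < 0"
        then show ?thesis
          using separating_certificate_lift[of s I y A j G y' c, OF s_def] unfolding A'_def c'_def by blast
      qed
    qed
  qed
qed

definition centered_distribution ::
  "'x set \<Rightarrow> 'v set \<Rightarrow> ('x \<Rightarrow> 'v \<Rightarrow> real) \<Rightarrow> ('x \<Rightarrow> real) \<Rightarrow> bool" where
  "centered_distribution X V b \<mu> \<longleftrightarrow>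
     (\<forall>x\<in>X. 0 \<le> \<mu> x) \<and> (\<Sum>x\<in>X. \<mu> x) = 1 \<and> (\<forall>i\<in>V. (\<Sum>x\<in>X. \<mu> x * b x i) = 0)"

lemma centered_distribution_expectation_affine_nonneg:
  assumes \<mu>: "centered_distribution X V b \<mu>"
    and nonneg: "\<forall>x\<in>X. 0 \<le> \<alpha> + \<gamma> * a x + (\<Sum>i\<in>V. \<beta> i * b x i)"
  shows "0 \<le> \<alpha> + \<gamma> * (\<Sum>x\<in>X. \<mu> x * a x)"
proof -
  have "(\<Sum>x\<in>X. \<mu> x * (\<Sum>i\<in>V. \<beta> i * b x i)) = (\<Sum>i\<in>V. \<beta> i * (\<Sum>x\<in>X. \<mu> x * b x i))"
    by (simp add: sum_distrib_left sum.swap[of _ X] algebra_simps)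
  also have "\<dots> = 0"
    using \<mu> by (simp add: centered_distribution_def)
  finally have "(\<Sum>x\<in>X. \<mu> x * (\<Sum>i\<in>V. \<beta> i * b x i)) = 0" .
  moreover have "(\<Sum>x\<in>X. \<mu> x * \<alpha>) = \<alpha>"
    using \<mu> by (simp add: centered_distribution_def flip: sum_distrib_right)
  moreover have "0 \<le> (\<Sum>x\<in>X. \<mu> x * (\<alpha> + \<gamma> * a x + (\<Sum>i\<in>V. \<beta> i * b x i)))"
    using \<mu> nonneg by (intro sum_nonneg) (auto simp: centered_distribution_def)
  ultimately show ?thesis
    by (simp add: distrib_left sum.distrib sum_distrib_left mult.left_commute)
qed

lemma centered_distribution_expectation_ge_Min:
  assumes "finite X" "centered_distribution X V b \<mu>"
  shows "Min (a ` X) \<le> (\<Sum>x\<in>X. \<mu> x * a x)"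
proof -
  have "X \<noteq> {}"
    using assms(2) by (auto simp: centered_distribution_def)
  then have "(\<Sum>x\<in>X. \<mu> x * Min (a ` X)) \<le> (\<Sum>x\<in>X. \<mu> x * a x)"
    using assms by (intro sum_mono mult_left_mono) (auto simp: centered_distribution_def)
  then show ?thesis
    using assms(2) by (simp add: centered_distribution_def flip: sum_distrib_right)
qed

lemma centered_distribution_normalize:
  assumes "\<forall>x\<in>X. 0 \<le> \<mu> x" "0 < (\<Sum>x\<in>X. \<mu> x)" "\<forall>i\<in>V. (\<Sum>x\<in>X. \<mu> x * b x i) = 0"
  shows "centered_distribution X V b (\<lambda>x. \<mu> x / (\<Sum>x\<in>X. \<mu> x))"
    and "(\<Sum>x\<in>X. \<mu> x / (\<Sum>x\<in>X. \<mu> x) * f x) = (\<Sum>x\<in>X. \<mu> x * f x) / (\<Sum>x\<in>X. \<mu> x)"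
proof -
  have scale: "(\<Sum>x\<in>X. \<mu> x / (\<Sum>x\<in>X. \<mu> x) * f x) = (\<Sum>x\<in>X. \<mu> x * f x) / (\<Sum>x\<in>X. \<mu> x)" for f
    by (simp add: sum_divide_distrib)
  show "(\<Sum>x\<in>X. \<mu> x / (\<Sum>x\<in>X. \<mu> x) * f x) = (\<Sum>x\<in>X. \<mu> x * f x) / (\<Sum>x\<in>X. \<mu> x)"
    by (fact scale)
  show "centered_distribution X V b (\<lambda>x. \<mu> x / (\<Sum>x\<in>X. \<mu> x))"
    using assms scale[of "\<lambda>_. 1"] scale[of "\<lambda>x. b x _"] by (simp add: centered_distribution_def)
qed

lemma conic_expectation_lower_bound:
  assumes X: "finite X" and \<mu>: "\<forall>x\<in>X. 0 \<le> \<mu> x"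
    and constraints: "\<forall>i\<in>V. (\<Sum>x\<in>X. \<mu> x * b x i) = 0"
    and lower: "\<And>\<mu>. centered_distribution X V b \<mu> \<Longrightarrow> v \<le> (\<Sum>x\<in>X. \<mu> x * a x)"
  shows "v * (\<Sum>x\<in>X. \<mu> x) \<le> (\<Sum>x\<in>X. \<mu> x * a x)"
proof (cases "(\<Sum>x\<in>X. \<mu> x) = 0")
  case True
  then show ?thesis
    using \<mu> X by (simp add: sum_nonneg_eq_0_iff)
next
  case False
  then have total: "0 < (\<Sum>x\<in>X. \<mu> x)"
    using \<mu> by (simp add: order_neq_le_trans sum_nonneg)
  have "v \<le> (\<Sum>x\<in>X. \<mu> x * a x) / (\<Sum>x\<in>X. \<mu> x)"
    using lower[OF centered_distribution_normalize(1)[OF \<mu> total constraints]]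
      centered_distribution_normalize(2)[OF \<mu> total constraints, of a]
    by linarith
  then show ?thesis
    using total by (simp add: pos_le_divide_eq)
qed

text \<open>The Farkas systems below are indexed by a constant coordinate, the objective, and one
  coordinate per constraint.\<close>

datatype 'v coord = Const | Objective | Constraint 'v

definition coords :: "'v set \<Rightarrow> 'v coord set" where
  "coords V = insert Const (insert Objective (Constraint ` V))"

lemma finite_coords: "finite V \<Longrightarrow> finite (coords V)"
  by (simp add: coords_def)

lemma sum_coords:
  assumes "finite V"
  shows "(\<Sum>k\<in>coords V. f k) = f Const + f Objective + (\<Sum>i\<in>V. f (Constraint i))"
  using assms by (simp add: coords_def sum.reindex inj_on_def add.assoc image_iff)

lemma lagrange_multipliers_exist:
  fixes V :: "'v set"
  assumes X: "finite X" and V: "finite V"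
    and lower: "\<And>\<mu>. centered_distribution X V b \<mu> \<Longrightarrow> v \<le> (\<Sum>x\<in>X. \<mu> x * a x)"
  shows "\<exists>lam. \<forall>x\<in>X. v \<le> a x + (\<Sum>i\<in>V. lam i * b x i)"
proof -
  define A where "A = (\<lambda>x k. case k of Const \<Rightarrow> 0 | Objective \<Rightarrow> a x - v | Constraint i \<Rightarrow> b x i)"
  define c :: "'v coord \<Rightarrow> real" where "c = (\<lambda>k. case k of Objective \<Rightarrow> - 1 | _ \<Rightarrow> 0)"
  from farkas_lemma[OF finite_coords[OF V] X, of A c] show ?thesis
  proof (elim disjE exE conjE)
    fix \<mu> assume \<mu>: "\<forall>x\<in>X. 0 \<le> \<mu> x" "\<forall>k\<in>coords V. (\<Sum>x\<in>X. \<mu> x * A x k) = c k"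
    have gap: "(\<Sum>x\<in>X. \<mu> x * a x) - v * (\<Sum>x\<in>X. \<mu> x) = - 1"
      using \<mu>(2)[rule_format, of Objective]
      by (simp add: coords_def A_def c_def right_diff_distrib sum_subtractf sum_distrib_left mult.commute)
    have constraints: "\<forall>i\<in>V. (\<Sum>x\<in>X. \<mu> x * b x i) = 0"
      using \<mu>(2) by (auto simp: coords_def A_def c_def)
    show ?thesis
      using conic_expectation_lower_bound[OF X \<mu>(1) constraints lower] gap by simp
  next
    fix y assume y: "\<forall>x\<in>X. 0 \<le> dot_on (coords V) y (A x)" "dot_on (coords V) y c < 0"
    have y_obj: "0 < y Objective"
      using y(2) by (simp add: dot_on_def sum_coords[OF V] c_def)
    have "v \<le> a x + (\<Sum>i\<in>V. y (Constraint i) / y Objective * b x i)" if x: "x \<in> X" for x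
    proof -
      have "0 \<le> y Objective * (a x - v) + (\<Sum>i\<in>V. y (Constraint i) * b x i)"
        using y(1) x by (simp add: dot_on_def sum_coords[OF V] A_def)
      then have "0 \<le> (a x - v) + (\<Sum>i\<in>V. y (Constraint i) * b x i) / y Objective"
        using y_obj by (simp add: field_simps)
      then show ?thesis
        by (simp add: sum_divide_distrib)
    qed
    then show ?thesis
      by (intro exI[of _ "\<lambda>i. y (Constraint i) / y Objective"]) blast
  qed
qed

lemma optimal_centered_distribution_exists:
  fixes V :: "'v set"
  assumes X: "finite X" and V: "finite V"
    and feasible: "centered_distribution X V b \<mu>0"
    and greatest: "\<And>w. (\<And>\<mu>. centered_distribution X V b \<mu> \<Longrightarrow> w \<le> (\<Sum>x\<in>X. \<mu> x * a x)) \<Longrightarrow> w \<le> v"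
  shows "\<exists>\<mu>. centered_distribution X V b \<mu> \<and> (\<Sum>x\<in>X. \<mu> x * a x) \<le> v"
proof -
  \<comment> \<open>the generator None is a slack variable on the objective coordinate\<close>
  define B where "B = (\<lambda>g k. case g of
      None \<Rightarrow> (case k of Objective \<Rightarrow> 1 | _ \<Rightarrow> 0)
    | Some x \<Rightarrow> (case k of Const \<Rightarrow> 1 | Objective \<Rightarrow> a x | Constraint i \<Rightarrow> b x i))"
  define c :: "'v coord \<Rightarrow> real" where "c = (\<lambda>k. case k of Const \<Rightarrow> 1 | Objective \<Rightarrow> v | _ \<Rightarrow> 0)"
  have sum_G: "(\<Sum>g\<in>insert None (Some ` X). f g) = f None + (\<Sum>x\<in>X. f (Some x))" for f :: "_ \<Rightarrow> real"
    using X by (simp add: sum.reindex)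
  have G: "finite (insert None (Some ` X))" using X by simp
  from farkas_lemma[OF finite_coords[OF V] G, of B c] show ?thesis
  proof (elim disjE exE conjE)
    fix \<mu> assume \<mu>: "\<forall>g\<in>insert None (Some ` X). 0 \<le> \<mu> g"
      "\<forall>k\<in>coords V. (\<Sum>g\<in>insert None (Some ` X). \<mu> g * B g k) = c k"
    have "centered_distribution X V b (\<lambda>x. \<mu> (Some x))"
      using \<mu> by (auto simp: centered_distribution_def coords_def sum_G B_def c_def)
    moreover have "\<mu> None + (\<Sum>x\<in>X. \<mu> (Some x) * a x) = v"
      using \<mu>(2)[rule_format, of Objective] by (simp add: coords_def sum_G B_def c_def)
    ultimately show ?thesis
      using \<mu>(1) by (intro exI[of _ "\<lambda>x. \<mu> (Some x)"]) auto
  next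
    fix y assume y: "\<forall>g\<in>insert None (Some ` X). 0 \<le> dot_on (coords V) y (B g)"
      "dot_on (coords V) y c < 0"
    have \<gamma>: "0 \<le> y Objective"
      using y(1) by (simp add: dot_on_def sum_coords[OF V] B_def)
    have "\<forall>x\<in>X. 0 \<le> y Const + y Objective * a x + (\<Sum>i\<in>V. y (Constraint i) * b x i)"
      using y(1) by (simp add: dot_on_def sum_coords[OF V] B_def mult.commute)
    note bound = centered_distribution_expectation_affine_nonneg[OF _ this]
    have neg: "y Const + y Objective * v < 0"
      using y(2) by (simp add: dot_on_def sum_coords[OF V] c_def mult.commute)
    show ?thesis
    proof (cases "y Objective = 0")
      case True
      then show ?thesis using bound[OF feasible] neg by simp
    next
      case False
      then have "0 < y Objective" using \<gamma> by simp
      moreover have "- y Const / y Objective \<le> v"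
        using bound \<open>0 < y Objective\<close> by (intro greatest) (force simp: field_simps)
      ultimately show ?thesis using neg by (simp add: field_simps)
    qed
  qed
qed

lemma finite_lagrangian_duality:
  fixes V :: "'v set"
  assumes X: "finite X" and V: "finite V" and feasible: "centered_distribution X V b \<mu>0"
  shows "\<exists>v. (\<exists>\<mu>. centered_distribution X V b \<mu> \<and> (\<Sum>x\<in>X. \<mu> x * a x) \<le> v)
           \<and> (\<exists>lam. \<forall>x\<in>X. v \<le> a x + (\<Sum>i\<in>V. lam i * b x i))"
proof -
  define objective_values where "objective_values = {\<Sum>x\<in>X. \<mu> x * a x | \<mu>. centered_distribution X V b \<mu>}"
  have nonempty: "objective_values \<noteq> {}"
    using feasible by (auto simp: objective_values_def)
  have bounded: "bdd_below objective_values"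
    using centered_distribution_expectation_ge_Min[OF X, of V b _ a]
    by (auto simp: objective_values_def bdd_below_def)
  have "Inf objective_values \<le> (\<Sum>x\<in>X. \<mu> x * a x)" if "centered_distribution X V b \<mu>" for \<mu>
    using that by (intro cInf_lower[OF _ bounded]) (auto simp: objective_values_def)
  moreover have "w \<le> Inf objective_values"
    if "\<And>\<mu>. centered_distribution X V b \<mu> \<Longrightarrow> w \<le> (\<Sum>x\<in>X. \<mu> x * a x)" for w
    using that by (intro cInf_greatest[OF nonempty]) (auto simp: objective_values_def)
  ultimately show ?thesis
    using lagrange_multipliers_exist[OF X V] optimal_centered_distribution_exists[OF X V feasible]
    by blast
qed

lemma has_integral_threshold:
  fixes a :: real
  assumes "0 \<le> a" "a \<le> 1"
  shows "((\<lambda>t. if t \<le> a then 1 else 0) has_integral a) {0..1}"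
proof -
  have "((\<lambda>t. 1::real) has_integral a) {0..a}"
    using has_integral_const_real[of "1::real" 0 a] assms by simp
  then have "((\<lambda>t. if t \<in> {0..a} then 1 else 0::real) has_integral a) {0..1}"
    using assms by (subst has_integral_restrict) auto
  then show ?thesis
    by (rule has_integral_cong[THEN iffD1, rotated]) auto
qed

lemma clique_linearization_ge_indicator:
  fixes z :: real and Y :: "'v \<Rightarrow> real"
  assumes "finite C" "\<forall>l\<in>C. Y l \<in> {0, 1}" "z \<in> {0, 1}"
  shows "- (if \<forall>l\<in>C. Y l = 1 then 1 else 0) \<le> (real (card C) - 1) * z - (\<Sum>l\<in>C. Y l * z)"
proof (cases "z = 1 \<and> \<not> (\<forall>l\<in>C. Y l = 1)")
  case True
  then obtain l0 where l0: "l0 \<in> C" "Y l0 = 0" using assms(2) by auto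
  have "(\<Sum>l\<in>C. Y l * z) = (\<Sum>l\<in>C - {l0}. Y l)"
    using True l0 assms(1) by (simp add: sum.remove)
  also have "\<dots> \<le> (\<Sum>l\<in>C - {l0}. 1)"
    using assms(2) by (intro sum_mono) auto
  also have "\<dots> = real (card C) - 1"
    using card.remove[OF assms(1) l0(1)] by simp
  finally show ?thesis using True by simp
qed (use assms in auto)

lemma clique_linearization_at_indicator:
  fixes Y :: "'v \<Rightarrow> real"
  shows "(real (card C) - 1) * (if \<forall>l\<in>C. Y l = 1 then 1 else 0)
           - (\<Sum>l\<in>C. Y l * (if \<forall>l\<in>C. Y l = 1 then 1 else 0))
         = - (if \<forall>l\<in>C. Y l = 1 then 1 else 0)"
  by simp

lemma sum_PiE_le_marginal:
  fixes q :: "('v \<Rightarrow> 'p) \<Rightarrow> real"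
  assumes "finite C" "finite P" "\<forall>p\<in>C \<rightarrow>\<^sub>E P. 0 \<le> q p" "p \<in> C \<rightarrow>\<^sub>E P"
  shows "q p \<le> (\<Sum>p'\<in>{p' \<in> C \<rightarrow>\<^sub>E P. p' l = p l}. q p')"
proof (rule member_le_sum)
  show "finite {p' \<in> C \<rightarrow>\<^sub>E P. p' l = p l}"
    using assms by (auto intro: finite_subset[OF _ finite_PiE[of C "\<lambda>_. P"]])
qed (use assms in auto)

lemma PiE_fix_coordinate:
  assumes "l \<in> C" "p0 \<in> P"
  shows "{p \<in> C \<rightarrow>\<^sub>E P. p l = p0} = PiE C (\<lambda>k. if k = l then {p0} else P)"
  using assms by (auto simp: PiE_iff extensional_def split: if_splits)

definition independent_coupling :: "'v set \<Rightarrow> real \<Rightarrow> ('v \<Rightarrow> 'p \<Rightarrow> real) \<Rightarrow> ('v \<Rightarrow> 'p) \<Rightarrow> real" where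
  "independent_coupling C R r p = (if 0 < R then R * (\<Prod>k\<in>C. r k (p k) / R) else 0)"

lemma independent_coupling_nonneg:
  assumes "\<forall>k\<in>C. \<forall>p\<in>P. 0 \<le> r k p" "p \<in> C \<rightarrow>\<^sub>E P"
  shows "0 \<le> independent_coupling C R r p"
  using assms by (auto simp: independent_coupling_def PiE_iff intro!: mult_nonneg_nonneg prod_nonneg divide_nonneg_pos)

lemma independent_coupling_marginal:
  assumes C: "finite C" "l \<in> C" and P: "finite P" "p0 \<in> P"
    and nonneg: "\<forall>k\<in>C. \<forall>p\<in>P. 0 \<le> r k p" and total: "\<forall>k\<in>C. (\<Sum>p\<in>P. r k p) = R"
  shows "(\<Sum>p\<in>{p \<in> C \<rightarrow>\<^sub>E P. p l = p0}. independent_coupling C R r p) = r l p0"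
proof (cases "0 < R")
  case True
  have "(\<Sum>p\<in>PiE C (\<lambda>k. if k = l then {p0} else P). \<Prod>k\<in>C. r k (p k) / R)
      = (\<Prod>k\<in>C. \<Sum>q\<in>(if k = l then {p0} else P). r k q / R)"
    using C P by (intro prod_sum_PiE[symmetric]) auto
  also have "\<dots> = (\<Prod>k\<in>C. if k = l then r l p0 / R else 1)"
    using total True by (intro prod.cong) (auto simp flip: sum_divide_distrib)
  also have "\<dots> = r l p0 / R"
    using C by (simp add: prod.delta)
  finally show ?thesis
    using True C P by (simp add: independent_coupling_def PiE_fix_coordinate flip: sum_distrib_left)
next
  case False
  have "r l p0 \<le> (\<Sum>p\<in>P. r l p)"
    using C P nonneg by (intro member_le_sum) auto
  moreover have "0 \<le> R"
    using total C nonneg by (metis sum_nonneg)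
  ultimately have "r l p0 = 0"
    using False C P nonneg total by force
  then show ?thesis
    using False by (simp add: independent_coupling_def)
qed

definition pattern_mass :: "('v \<Rightarrow> 'p) set \<Rightarrow> (('v \<Rightarrow> 'p) \<Rightarrow> real) \<Rightarrow> 'v \<Rightarrow> 'p \<Rightarrow> real" where
  "pattern_mass D m k p = (\<Sum>d\<in>D. if d k = p then m d else 0)"

lemma pattern_mass_le:
  assumes "finite D" "\<forall>d'\<in>D. \<forall>d''\<in>D. d' \<noteq> d'' \<longrightarrow> d' k \<noteq> d'' k"
    and "\<forall>d\<in>D. m d \<le> f (d k)" "0 \<le> f p"
  shows "pattern_mass D m k p \<le> f p"
proof (cases "\<exists>d0\<in>D. d0 k = p")
  case True
  then obtain d0 where d0: "d0 \<in> D" "d0 k = p" by blast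
  have "(\<Sum>d\<in>D - {d0}. if d k = p then m d else 0) = 0"
    using assms(2) d0 by (intro sum.neutral) force
  then have "pattern_mass D m k p = m d0"
    unfolding pattern_mass_def using d0 assms(1) by (simp add: sum.remove)
  then show ?thesis
    using assms(3) d0 by auto
qed (use assms(4) in \<open>auto simp: pattern_mass_def intro!: sum.neutral\<close>)

lemma sum_pattern_mass:
  assumes "D \<subseteq> C \<rightarrow>\<^sub>E P" "k \<in> C" "finite P"
  shows "(\<Sum>p\<in>P. pattern_mass D m k p) = (\<Sum>d\<in>D. m d)"
  unfolding pattern_mass_def
  by (subst sum.swap) (use assms in \<open>auto intro!: sum.cong simp: PiE_iff sum.delta'\<close>)

lemma sum_PiE_fix_coordinate_patterns:
  assumes "D \<subseteq> C \<rightarrow>\<^sub>E P" "finite C" "finite P"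
  shows "(\<Sum>p\<in>{p \<in> C \<rightarrow>\<^sub>E P. p l = p0}. if p \<in> D then m p else 0) = pattern_mass D m l p0"
proof -
  have "finite D"
    using finite_subset[OF assms(1)] assms(2,3) by (simp add: finite_PiE)
  moreover have "{p \<in> C \<rightarrow>\<^sub>E P. p l = p0} \<inter> D = {d \<in> D. d l = p0}"
    using assms(1) by auto
  moreover have "finite {p \<in> C \<rightarrow>\<^sub>E P. p l = p0}"
    using assms(2,3) by (simp add: finite_PiE)
  ultimately show ?thesis
    unfolding pattern_mass_def by (simp add: sum.inter_restrict[symmetric] sum.inter_filter)
qed

text \<open>For Potts patterns the patterns take distinct values at every variable, so each pattern d can
  be given its full mass min_l y_l(d_l); the remaining row mass is distributed independently.\<close>

lemma potts_coupling_exists: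
  fixes y :: "'v \<Rightarrow> 'p \<Rightarrow> real"
  assumes C: "finite C" "C \<noteq> {}" and P: "finite P"
    and D: "D \<subseteq> C \<rightarrow>\<^sub>E P" and potts: "\<forall>d'\<in>D. \<forall>d''\<in>D. d' \<noteq> d'' \<longrightarrow> (\<forall>i\<in>C. d' i \<noteq> d'' i)"
    and y_nonneg: "\<forall>k\<in>C. \<forall>p\<in>P. 0 \<le> y k p" and y_sum: "\<forall>k\<in>C. (\<Sum>p\<in>P. y k p) = 1"
  shows "\<exists>q. (\<forall>p\<in>C \<rightarrow>\<^sub>E P. 0 \<le> q p)
           \<and> (\<forall>l\<in>C. \<forall>p0\<in>P. (\<Sum>p\<in>{p \<in> C \<rightarrow>\<^sub>E P. p l = p0}. q p) = y l p0)
           \<and> (\<forall>d\<in>D. Min ((\<lambda>l. y l (d l)) ` C) \<le> q d)"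
proof -
  define m where "m d = Min ((\<lambda>l. y l (d l)) ` C)" for d
  define r where "r k p = y k p - pattern_mass D m k p" for k p
  define R where "R = 1 - (\<Sum>d\<in>D. m d)"
  define q where "q p = (if p \<in> D then m p else 0) + independent_coupling C R r p" for p
  have m_nonneg: "0 \<le> m d" and m_le: "m d \<le> y l (d l)" if "d \<in> D" "l \<in> C" for d l
  proof -
    have "m d \<in> (\<lambda>l. y l (d l)) ` C"
      unfolding m_def using C by (intro Min_in) auto
    then show "0 \<le> m d"
      using y_nonneg D that(1) by (auto simp: PiE_iff)
    show "m d \<le> y l (d l)"
      unfolding m_def using C that(2) by (intro Min_le) auto
  qed
  have r_nonneg: "\<forall>k\<in>C. \<forall>p\<in>P. 0 \<le> r k p"
    using potts m_le y_nonneg finite_subset[OF D] C P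
    by (auto simp: r_def finite_PiE intro!: pattern_mass_le)
  have r_total: "\<forall>k\<in>C. (\<Sum>p\<in>P. r k p) = R"
    using y_sum sum_pattern_mass[OF D _ P] by (simp add: r_def R_def sum_subtractf)
  have "\<forall>p\<in>C \<rightarrow>\<^sub>E P. 0 \<le> q p"
    using independent_coupling_nonneg[OF r_nonneg] m_nonneg C by (auto simp: q_def)
  moreover have "(\<Sum>p\<in>{p \<in> C \<rightarrow>\<^sub>E P. p l = p0}. q p) = y l p0" if "l \<in> C" "p0 \<in> P" for l p0
    unfolding q_def sum.distrib sum_PiE_fix_coordinate_patterns[OF D C(1) P]
      independent_coupling_marginal[OF C(1) that(1) P that(2) r_nonneg r_total]
    by (simp add: r_def)
  moreover have "\<forall>d\<in>D. m d \<le> q d"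
    using independent_coupling_nonneg[OF r_nonneg] D by (auto simp: q_def)
  ultimately show ?thesis
    unfolding m_def by blast
qed

text \<open>Binary unary variables modulo their irrelevant values outside V \<times> P, made zero so that
  the set is finite.\<close>

definition binary_y_reps :: "'v set \<Rightarrow> 'p set \<Rightarrow> ('v \<Rightarrow> 'p \<Rightarrow> real) set" where
  "binary_y_reps V P = (\<lambda>f i p. if i \<in> V \<and> p \<in> P then f (i, p) else 0) ` (V \<times> P \<rightarrow>\<^sub>E {0, 1})"

definition restrict_y :: "'v set \<Rightarrow> 'p set \<Rightarrow> ('v \<Rightarrow> 'p \<Rightarrow> real) \<Rightarrow> ('v \<Rightarrow> 'p \<Rightarrow> real)" where
  "restrict_y V P y = (\<lambda>i p. if i \<in> V \<and> p \<in> P then y i p else 0)"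

lemma finite_binary_y_reps: "finite V \<Longrightarrow> finite P \<Longrightarrow> finite (binary_y_reps V P)"
  unfolding binary_y_reps_def by (intro finite_imageI finite_PiE) auto

lemma binary_y_reps_binary: "y \<in> binary_y_reps V P \<Longrightarrow> binary_y V P y"
  unfolding binary_y_reps_def binary_y_def by (auto simp: PiE_iff)

lemma restrict_y_in_binary_y_reps: "binary_y V P y \<Longrightarrow> restrict_y V P y \<in> binary_y_reps V P"
  unfolding binary_y_reps_def
  by (rule image_eqI[where x = "restrict (\<lambda>(i, p). y i p) (V \<times> P)"])
    (auto simp: binary_y_def restrict_y_def fun_eq_iff)

lemma binary_y_reps_nonempty: "binary_y_reps V P \<noteq> {}"
  using restrict_y_in_binary_y_reps[of V P "\<lambda>_ _. 0"] by (auto simp: binary_y_def)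

definition pattern_energy ::
  "'v set set \<Rightarrow> ('v set \<Rightarrow> ('v \<Rightarrow> 'p) set) \<Rightarrow> ('v set \<Rightarrow> ('v \<Rightarrow> 'p) \<Rightarrow> real)
   \<Rightarrow> ('v \<Rightarrow> 'p \<Rightarrow> real) \<Rightarrow> real" where
  "pattern_energy Cs D th y = (\<Sum>C\<in>Cs. \<Sum>d\<in>D C. th C d * (if \<forall>l\<in>C. y l (d l) = 1 then 1 else 0))"

definition fractional_pattern_energy ::
  "'v set set \<Rightarrow> ('v set \<Rightarrow> ('v \<Rightarrow> 'p) set) \<Rightarrow> ('v set \<Rightarrow> ('v \<Rightarrow> 'p) \<Rightarrow> real)
   \<Rightarrow> ('v \<Rightarrow> 'p \<Rightarrow> real) \<Rightarrow> real" where
  "fractional_pattern_energy Cs D th y = (\<Sum>C\<in>Cs. \<Sum>d\<in>D C. th C d * Min ((\<lambda>l. y l (d l)) ` C))"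

definition unary_defect :: "'p set \<Rightarrow> ('v \<Rightarrow> 'p \<Rightarrow> real) \<Rightarrow> 'v \<Rightarrow> real" where
  "unary_defect P y i = (\<Sum>p\<in>P. y i p) - 1"

definition lagrangian ::
  "'v set \<Rightarrow> 'p set \<Rightarrow> 'v set set \<Rightarrow> ('v set \<Rightarrow> ('v \<Rightarrow> 'p) set)
   \<Rightarrow> ('v set \<Rightarrow> ('v \<Rightarrow> 'p) \<Rightarrow> real) \<Rightarrow> ('v \<Rightarrow> real) \<Rightarrow> ('v \<Rightarrow> 'p \<Rightarrow> real) \<Rightarrow> real" where
  "lagrangian V P Cs D th lam y = pattern_energy Cs D th y + (\<Sum>i\<in>V. lam i * unary_defect P y i)"

lemma centered_mixture_fractional:
  assumes "\<forall>x\<in>X. binary_y V P x" and \<mu>: "centered_distribution X V (unary_defect P) \<mu>"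
  shows "\<forall>i\<in>V. \<forall>p\<in>P. 0 \<le> (\<Sum>x\<in>X. \<mu> x * x i p) \<and> (\<Sum>x\<in>X. \<mu> x * x i p) \<le> 1"
    and "\<forall>i\<in>V. (\<Sum>p\<in>P. \<Sum>x\<in>X. \<mu> x * x i p) = 1"
proof (intro ballI conjI)
  fix i p assume "i \<in> V" "p \<in> P"
  then have x01: "x \<in> X \<Longrightarrow> x i p \<in> {0, 1}" for x
    using assms(1) by (auto simp: binary_y_def)
  show "0 \<le> (\<Sum>x\<in>X. \<mu> x * x i p)"
    using \<mu> x01 by (intro sum_nonneg) (force simp: centered_distribution_def)
  have "(\<Sum>x\<in>X. \<mu> x * x i p) \<le> (\<Sum>x\<in>X. \<mu> x)"
    using \<mu> x01 by (intro sum_mono) (force simp: centered_distribution_def)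
  then show "(\<Sum>x\<in>X. \<mu> x * x i p) \<le> 1"
    using \<mu> by (simp add: centered_distribution_def)
next
  show "\<forall>i\<in>V. (\<Sum>p\<in>P. \<Sum>x\<in>X. \<mu> x * x i p) = 1"
  proof
    fix i assume "i \<in> V"
    have "(\<Sum>p\<in>P. \<Sum>x\<in>X. \<mu> x * x i p) = (\<Sum>x\<in>X. \<mu> x * unary_defect P x i + \<mu> x)"
      by (subst sum.swap) (simp add: unary_defect_def sum_distrib_left algebra_simps)
    also have "\<dots> = 1"
      using \<mu> \<open>i \<in> V\<close> by (simp add: centered_distribution_def sum.distrib)
    finally show "(\<Sum>p\<in>P. \<Sum>x\<in>X. \<mu> x * x i p) = 1" .
  qed
qed

locale potts_relaxation =
  fixes V :: "'v set" and P :: "'p set" and Cs :: "'v set set"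
    and D :: "'v set \<Rightarrow> ('v \<Rightarrow> 'p) set"
    and th :: "'v set \<Rightarrow> ('v \<Rightarrow> 'p) \<Rightarrow> real"
  assumes finite_V: "finite V" and finite_P: "finite P" and P_nonempty: "P \<noteq> {}"
    and finite_Cs: "finite Cs"
    and cliques: "\<forall>C\<in>Cs. C \<noteq> {} \<and> C \<subseteq> V"
    and patterns: "\<forall>C\<in>Cs. D C \<subseteq> C \<rightarrow>\<^sub>E P"
    and th_nonpos: "\<forall>C\<in>Cs. \<forall>d\<in>D C. th C d \<le> 0"
    and potts: "\<forall>C\<in>Cs. \<forall>d'\<in>D C. \<forall>d''\<in>D C. d' \<noteq> d'' \<longrightarrow> (\<forall>i\<in>C. d' i \<noteq> d'' i)"
begin

lemma finite_clique: "C \<in> Cs \<Longrightarrow> finite C"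
  using cliques finite_V finite_subset by blast

lemma finite_patterns: "C \<in> Cs \<Longrightarrow> finite (D C)"
  using patterns finite_subset finite_PiE finite_clique finite_P by metis

lemma pattern_in_range: "C \<in> Cs \<Longrightarrow> d \<in> D C \<Longrightarrow> l \<in> C \<Longrightarrow> l \<in> V \<and> d l \<in> P"
  using patterns cliques by (auto simp: PiE_iff)

lemma lagrangian_restrict_y: "lagrangian V P Cs D th lam (restrict_y V P y) = lagrangian V P Cs D th lam y"
  unfolding lagrangian_def pattern_energy_def unary_defect_def restrict_y_def
  using pattern_in_range by (auto intro!: sum.cong arg_cong2[where f = "(+)"])

lemma pattern_energy_le_Estar:
  assumes "binary_y V P y" "binary_z Cs D z"
  shows "pattern_energy Cs D th y \<le> Estar Cs D th y z"
  unfolding pattern_energy_def Estar_def sum_negf[symmetric]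
proof (intro sum_mono)
  fix C d assume C: "C \<in> Cs" and d: "d \<in> D C"
  have linearization: "- (if \<forall>l\<in>C. y l (d l) = 1 then 1 else 0)
      \<le> (real (card C) - 1) * z C d - (\<Sum>l\<in>C. y l (d l) * z C d)"
    using assms finite_clique[OF C] pattern_in_range[OF C d]
    by (intro clique_linearization_ge_indicator) (auto simp: binary_y_def binary_z_def C d)
  show "th C d * (if \<forall>l\<in>C. y l (d l) = 1 then 1 else 0)
      \<le> - (th C d * ((real (card C) - 1) * z C d - (\<Sum>l\<in>C. y l (d l) * z C d)))"
    using mult_left_mono_neg[OF linearization, of "th C d"] th_nonpos C d
    unfolding mult_minus_right by (meson le_minus_iff)
qed

lemma Estar_at_indicator:
  "Estar Cs D th y (\<lambda>C d. if \<forall>l\<in>C. y l (d l) = 1 then 1 else 0) = pattern_energy Cs D th y"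
  unfolding Estar_def pattern_energy_def clique_linearization_at_indicator
  by (simp add: sum_negf)

lemma dual_fun_eq_Min:
  "dual_fun V P Cs D th lam = Min (lagrangian V P Cs D th lam ` binary_y_reps V P)"
proof (unfold dual_fun_def, rule cInf_eq_minimum)
  let ?m = "Min (lagrangian V P Cs D th lam ` binary_y_reps V P)"
  have "?m \<in> lagrangian V P Cs D th lam ` binary_y_reps V P"
    using finite_binary_y_reps[OF finite_V finite_P] binary_y_reps_nonempty by (intro Min_in) auto
  then obtain y where y: "y \<in> binary_y_reps V P" "lagrangian V P Cs D th lam y = ?m"
    by (metis imageE)
  define z where "z = (\<lambda>C d. if \<forall>l\<in>C. y l (d l) = 1 then 1 else 0 :: real)"
  have "binary_z Cs D z"
    by (simp add: binary_z_def z_def)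
  moreover have "Estar Cs D th y z + (\<Sum>i\<in>V. lam i * ((\<Sum>p\<in>P. y i p) - 1)) = ?m"
    using y(2) by (simp add: z_def Estar_at_indicator lagrangian_def unary_defect_def)
  ultimately show "?m \<in> {Estar Cs D th y z + (\<Sum>i\<in>V. lam i * ((\<Sum>p\<in>P. y i p) - 1)) | y z.
      binary_y V P y \<and> binary_z Cs D z}"
    using binary_y_reps_binary[OF y(1)] by (intro CollectI exI[of _ y] exI[of _ z]) simp
next
  fix e assume "e \<in> {Estar Cs D th y z + (\<Sum>i\<in>V. lam i * ((\<Sum>p\<in>P. y i p) - 1)) | y z.
      binary_y V P y \<and> binary_z Cs D z}"
  then obtain y z where yz: "binary_y V P y" "binary_z Cs D z"
    and e: "e = Estar Cs D th y z + (\<Sum>i\<in>V. lam i * ((\<Sum>p\<in>P. y i p) - 1))" by blast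
  have "Min (lagrangian V P Cs D th lam ` binary_y_reps V P)
      \<le> lagrangian V P Cs D th lam (restrict_y V P y)"
    using restrict_y_in_binary_y_reps[OF yz(1)] finite_binary_y_reps[OF finite_V finite_P]
    by (intro Min_le) auto
  also have "\<dots> \<le> e"
    unfolding lagrangian_restrict_y using pattern_energy_le_Estar[OF yz]
    by (simp add: e lagrangian_def unary_defect_def)
  finally show "Min (lagrangian V P Cs D th lam ` binary_y_reps V P) \<le> e" .
qed

lemma dual_fun_le_lagrangian:
  "binary_y V P y \<Longrightarrow> dual_fun V P Cs D th lam \<le> lagrangian V P Cs D th lam y"
  unfolding dual_fun_eq_Min lagrangian_restrict_y[of lam y, symmetric]
  using restrict_y_in_binary_y_reps finite_binary_y_reps[OF finite_V finite_P] by (intro Min_le) auto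

lemma Min_pattern_values:
  assumes "C \<in> Cs"
  shows "t \<le> Min ((\<lambda>l. y l (d l)) ` C) \<longleftrightarrow> (\<forall>l\<in>C. t \<le> y l (d l))"
    and "\<exists>l\<in>C. Min ((\<lambda>l. y l (d l)) ` C) = y l (d l)"
proof -
  show "t \<le> Min ((\<lambda>l. y l (d l)) ` C) \<longleftrightarrow> (\<forall>l\<in>C. t \<le> y l (d l))"
    using assms cliques finite_clique[OF assms] by (simp add: Min_ge_iff)
  have "Min ((\<lambda>l. y l (d l)) ` C) \<in> (\<lambda>l. y l (d l)) ` C"
    using assms cliques finite_clique[OF assms] by (intro Min_in) auto
  then show "\<exists>l\<in>C. Min ((\<lambda>l. y l (d l)) ` C) = y l (d l)"
    by auto
qed

text \<open>Threshold rounding: averaging the binary labelings [t \<le> y_ip] over t \<in> [0, 1] recovers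
  the fractional Lagrangian, and every one of them is bounded below by the dual function.\<close>

lemma dual_fun_le_fractional:
  assumes y01: "\<forall>i\<in>V. \<forall>p\<in>P. 0 \<le> y i p \<and> y i p \<le> 1"
  shows "dual_fun V P Cs D th lam
      \<le> fractional_pattern_energy Cs D th y + (\<Sum>i\<in>V. lam i * unary_defect P y i)"
proof -
  define rounded where "rounded t = (\<lambda>i p. if t \<le> y i p then 1 else 0 :: real)" for t
  define h where "h t = (\<Sum>C\<in>Cs. \<Sum>d\<in>D C. th C d * (if t \<le> Min ((\<lambda>l. y l (d l)) ` C) then 1 else 0))
      + (\<Sum>i\<in>V. lam i * ((\<Sum>p\<in>P. if t \<le> y i p then 1 else 0) - 1))" for t
  have "h t = lagrangian V P Cs D th lam (rounded t)" for t
    unfolding h_def lagrangian_def pattern_energy_def unary_defect_def rounded_def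
    by (intro arg_cong2[where f = "(+)"] sum.cong refl arg_cong2[where f = "(*)"])
      (auto simp: Min_pattern_values(1))
  then have lower: "dual_fun V P Cs D th lam \<le> h t" for t
    using dual_fun_le_lagrangian[of "rounded t"] by (simp add: binary_y_def rounded_def)
  have Min01: "0 \<le> Min ((\<lambda>l. y l (d l)) ` C) \<and> Min ((\<lambda>l. y l (d l)) ` C) \<le> 1"
    if "C \<in> Cs" "d \<in> D C" for C d
    using Min_pattern_values(2)[OF that(1), of y d] y01 pattern_in_range[OF that] by force
  have "(h has_integral fractional_pattern_energy Cs D th y + (\<Sum>i\<in>V. lam i * unary_defect P y i)) {0..1}"
    unfolding h_def fractional_pattern_energy_def unary_defect_def
  proof (intro has_integral_add has_integral_sum finite_Cs finite_patterns finite_V finite_P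
      has_integral_mult_right has_integral_diff has_integral_threshold)
    show "((\<lambda>t::real. 1::real) has_integral 1) {0..1}"
      using has_integral_const_real[of "1::real" 0 1] by simp
  qed (use Min01 y01 in auto)
  then show ?thesis
    using has_integral_le[OF has_integral_const_real[of "dual_fun V P Cs D th lam" 0 1]] lower
    by force
qed

lemma weak_duality:
  assumes "lp_feasible V P Cs D y yC"
  shows "dual_fun V P Cs D th lam \<le> lp_obj Cs D th yC"
proof -
  have "dual_fun V P Cs D th lam
      \<le> fractional_pattern_energy Cs D th y + (\<Sum>i\<in>V. lam i * unary_defect P y i)"
    using assms by (intro dual_fun_le_fractional) (auto simp: lp_feasible_def)
  also have "(\<Sum>i\<in>V. lam i * unary_defect P y i) = 0"
    using assms by (simp add: lp_feasible_def unary_defect_def)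
  also have "fractional_pattern_energy Cs D th y \<le> lp_obj Cs D th yC"
    unfolding fractional_pattern_energy_def lp_obj_def
  proof (intro sum_mono)
    fix C d assume C: "C \<in> Cs" and d: "d \<in> D C"
    have "yC C d \<le> Min ((\<lambda>l. y l (d l)) ` C)"
      using assms C d by (simp add: Min_pattern_values(1) lp_feasible_def)
    then show "th C d * Min ((\<lambda>l. y l (d l)) ` C) \<le> th C d * yC C d"
      using th_nonpos C d by (intro mult_left_mono_neg) auto
  qed
  finally show ?thesis by simp
qed

lemma lp_feasible_of_couplings:
  assumes y01: "\<forall>i\<in>V. \<forall>p\<in>P. 0 \<le> y i p \<and> y i p \<le> 1" and y_sum: "\<forall>i\<in>V. (\<Sum>p\<in>P. y i p) = 1"
    and yC_nonneg: "\<forall>C\<in>Cs. \<forall>p\<in>C \<rightarrow>\<^sub>E P. 0 \<le> yC C p"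
    and yC_marginal: "\<forall>C\<in>Cs. \<forall>l\<in>C. \<forall>p0\<in>P. (\<Sum>p\<in>{p \<in> C \<rightarrow>\<^sub>E P. p l = p0}. yC C p) = y l p0"
  shows "lp_feasible V P Cs D y yC"
proof -
  have yC_le: "yC C p \<le> y l (p l)" if C: "C \<in> Cs" and p: "p \<in> C \<rightarrow>\<^sub>E P" and l: "l \<in> C" for C p l
  proof -
    have "yC C p \<le> (\<Sum>p'\<in>{p' \<in> C \<rightarrow>\<^sub>E P. p' l = p l}. yC C p')"
      using yC_nonneg C by (intro sum_PiE_le_marginal[OF finite_clique[OF C] finite_P _ p]) auto
    also have "\<dots> = y l (p l)"
      using yC_marginal C l p by auto
    finally show ?thesis .
  qed
  show ?thesis
    unfolding lp_feasible_def
  proof (intro conjI ballI)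
    show "yC C p \<le> 1" if C: "C \<in> Cs" and p: "p \<in> C \<rightarrow>\<^sub>E P" for C p
    proof -
      obtain l where l: "l \<in> C" using cliques C by auto
      then have "l \<in> V" "p l \<in> P" using cliques C p by auto
      then show ?thesis
        using yC_le[OF C p l] y01 by fastforce
    qed
    show "yC C d \<le> y l (d l)" if "C \<in> Cs" "d \<in> D C" "l \<in> C" for C d l
      using yC_le[OF that(1) _ that(3)] patterns that by blast
  qed (use y01 y_sum yC_nonneg yC_marginal in auto)
qed

lemma lp_feasible_exists_le_fractional:
  assumes y01: "\<forall>i\<in>V. \<forall>p\<in>P. 0 \<le> y i p \<and> y i p \<le> 1" and y_sum: "\<forall>i\<in>V. (\<Sum>p\<in>P. y i p) = 1"
  shows "\<exists>yC. lp_feasible V P Cs D y yC \<and> lp_obj Cs D th yC \<le> fractional_pattern_energy Cs D th y"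
proof -
  have "\<forall>C\<in>Cs. \<exists>q. (\<forall>p\<in>C \<rightarrow>\<^sub>E P. 0 \<le> q p)
      \<and> (\<forall>l\<in>C. \<forall>p0\<in>P. (\<Sum>p\<in>{p \<in> C \<rightarrow>\<^sub>E P. p l = p0}. q p) = y l p0)
      \<and> (\<forall>d\<in>D C. Min ((\<lambda>l. y l (d l)) ` C) \<le> q d)"
    using cliques patterns potts y01 y_sum
    by (intro ballI potts_coupling_exists finite_clique finite_P) (auto dest!: subsetD)
  then obtain yC where yC: "\<forall>C\<in>Cs. (\<forall>p\<in>C \<rightarrow>\<^sub>E P. 0 \<le> yC C p)
      \<and> (\<forall>l\<in>C. \<forall>p0\<in>P. (\<Sum>p\<in>{p \<in> C \<rightarrow>\<^sub>E P. p l = p0}. yC C p) = y l p0)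
      \<and> (\<forall>d\<in>D C. Min ((\<lambda>l. y l (d l)) ` C) \<le> yC C d)"
    by (rule bchoice[THEN exE])
  then have "lp_feasible V P Cs D y yC"
    using y01 y_sum by (intro lp_feasible_of_couplings) auto
  moreover have "lp_obj Cs D th yC \<le> fractional_pattern_energy Cs D th y"
    unfolding lp_obj_def fractional_pattern_energy_def
    using yC th_nonpos by (intro sum_mono mult_left_mono_neg) auto
  ultimately show ?thesis by blast
qed

lemma fractional_pattern_energy_mixture_le:
  assumes "\<forall>x\<in>X. binary_y V P x" "\<forall>x\<in>X. 0 \<le> \<mu> x"
  shows "fractional_pattern_energy Cs D th (\<lambda>i p. \<Sum>x\<in>X. \<mu> x * x i p)
      \<le> (\<Sum>x\<in>X. \<mu> x * pattern_energy Cs D th x)"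
proof -
  define hits :: "'v set \<Rightarrow> ('v \<Rightarrow> 'p) \<Rightarrow> ('v \<Rightarrow> 'p \<Rightarrow> real) \<Rightarrow> real"
    where "hits C d x = (if \<forall>l\<in>C. x l (d l) = 1 then 1 else 0 :: real)" for C d x
  have "(\<Sum>x\<in>X. \<mu> x * pattern_energy Cs D th x)
      = (\<Sum>C\<in>Cs. \<Sum>d\<in>D C. th C d * (\<Sum>x\<in>X. \<mu> x * hits C d x))"
    unfolding pattern_energy_def hits_def sum_distrib_left
    by (subst sum.swap, rule sum.cong[OF refl], subst sum.swap) (simp add: algebra_simps)
  moreover have "th C d * Min ((\<lambda>l. \<Sum>x\<in>X. \<mu> x * x l (d l)) ` C)
      \<le> th C d * (\<Sum>x\<in>X. \<mu> x * hits C d x)" if C: "C \<in> Cs" and d: "d \<in> D C" for C d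
  proof (rule mult_left_mono_neg)
    have "\<forall>l\<in>C. (\<Sum>x\<in>X. \<mu> x * hits C d x) \<le> (\<Sum>x\<in>X. \<mu> x * x l (d l))"
    proof
      fix l assume l: "l \<in> C"
      then have "x \<in> X \<Longrightarrow> x l (d l) \<in> {0, 1}" for x
        using assms(1) pattern_in_range[OF C d l] by (auto simp: binary_y_def)
      then show "(\<Sum>x\<in>X. \<mu> x * hits C d x) \<le> (\<Sum>x\<in>X. \<mu> x * x l (d l))"
        using assms(2) l by (intro sum_mono mult_left_mono) (force simp: hits_def)+
    qed
    then show "(\<Sum>x\<in>X. \<mu> x * hits C d x) \<le> Min ((\<lambda>l. \<Sum>x\<in>X. \<mu> x * x l (d l)) ` C)"
      using Min_pattern_values(1)[OF C, of _ "\<lambda>i p. \<Sum>x\<in>X. \<mu> x * x i p" d] by simp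
  qed (use th_nonpos C d in auto)
  ultimately show ?thesis
    unfolding fractional_pattern_energy_def by (simp add: sum_mono)
qed

lemma centered_distribution_exists:
  "\<exists>\<mu>. centered_distribution (binary_y_reps V P) V (unary_defect P) \<mu>"
proof -
  obtain p0 where p0: "p0 \<in> P" using P_nonempty by auto
  define x0 where "x0 = restrict_y V P (\<lambda>i p. if p = p0 then 1 else 0)"
  have x0: "x0 \<in> binary_y_reps V P"
    unfolding x0_def by (rule restrict_y_in_binary_y_reps) (auto simp: binary_y_def)
  have "unary_defect P x0 i = 0" if "i \<in> V" for i
    using that p0 finite_P by (simp add: unary_defect_def x0_def restrict_y_def)
  moreover have point_mass: "(\<Sum>x\<in>binary_y_reps V P. (if x = x0 then 1 else 0) * f x) = f x0"
    for f :: "('v \<Rightarrow> 'p \<Rightarrow> real) \<Rightarrow> real"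
  proof -
    have "(\<Sum>x\<in>binary_y_reps V P. (if x = x0 then 1 else 0) * f x)
        = (\<Sum>x\<in>binary_y_reps V P. if x = x0 then f x else 0)"
      by (rule sum.cong) auto
    then show ?thesis
      using x0 finite_binary_y_reps[OF finite_V finite_P] by (simp add: sum.delta)
  qed
  ultimately have "centered_distribution (binary_y_reps V P) V (unary_defect P) (\<lambda>x. if x = x0 then 1 else 0)"
    using point_mass[of "\<lambda>_. 1"] by (simp add: centered_distribution_def)
  then show ?thesis by blast
qed

lemma lp_value_eq_max_dual:
  "\<exists>v. (\<exists>y yC. lp_feasible V P Cs D y yC \<and> lp_obj Cs D th yC = v)
     \<and> (\<forall>y yC. lp_feasible V P Cs D y yC \<longrightarrow> v \<le> lp_obj Cs D th yC)
     \<and> (\<exists>lam. dual_fun V P Cs D th lam = v)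
     \<and> (\<forall>lam. dual_fun V P Cs D th lam \<le> v)"
proof -
  let ?X = "binary_y_reps V P"
  have binary: "\<forall>x\<in>?X. binary_y V P x"
    using binary_y_reps_binary by blast
  obtain v \<mu> lam where \<mu>: "centered_distribution ?X V (unary_defect P) \<mu>"
      "(\<Sum>x\<in>?X. \<mu> x * pattern_energy Cs D th x) \<le> v"
    and lam: "\<forall>x\<in>?X. v \<le> lagrangian V P Cs D th lam x"
    using centered_distribution_exists finite_lagrangian_duality[OF
        finite_binary_y_reps[OF finite_V finite_P] finite_V, of "unary_defect P" _ "pattern_energy Cs D th"]
    unfolding lagrangian_def by blast
  obtain yC where yC: "lp_feasible V P Cs D (\<lambda>i p. \<Sum>x\<in>?X. \<mu> x * x i p) yC"
      "lp_obj Cs D th yC \<le> fractional_pattern_energy Cs D th (\<lambda>i p. \<Sum>x\<in>?X. \<mu> x * x i p)"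
    using lp_feasible_exists_le_fractional[OF centered_mixture_fractional[OF binary \<mu>(1)]] by blast
  have "lp_obj Cs D th yC \<le> v"
    using yC(2) fractional_pattern_energy_mixture_le[OF binary, of \<mu>] \<mu>
    by (force simp: centered_distribution_def)
  also have "v \<le> dual_fun V P Cs D th lam"
    unfolding dual_fun_eq_Min using lam finite_binary_y_reps[OF finite_V finite_P] binary_y_reps_nonempty
    by (subst Min_ge_iff) auto
  finally have attained: "lp_obj Cs D th yC \<le> dual_fun V P Cs D th lam" .
  show ?thesis
  proof (intro exI conjI allI impI)
    show "lp_feasible V P Cs D (\<lambda>i p. \<Sum>x\<in>?X. \<mu> x * x i p) yC"
      by (fact yC(1))
    show "lp_obj Cs D th yC \<le> lp_obj Cs D th yC'" if "lp_feasible V P Cs D y' yC'" for y' yC'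
      using attained weak_duality[OF that] by (rule order_trans)
    show "dual_fun V P Cs D th lam = lp_obj Cs D th yC"
      using attained weak_duality[OF yC(1)] by (rule order_antisym[rotated])
    show "dual_fun V P Cs D th lam' \<le> lp_obj Cs D th yC" for lam'
      by (rule weak_duality[OF yC(1)])
  qed simp
qed

end

theorem theorem6:
  fixes V :: "'v set" and P :: "'p set" and Cs :: "'v set set"
    and D :: "'v set \<Rightarrow> ('v \<Rightarrow> 'p) set"
    and th :: "'v set \<Rightarrow> ('v \<Rightarrow> 'p) \<Rightarrow> real"
  assumes finV: "finite V" and finP: "finite P" and Pne: "P \<noteq> {}"
    and finCs: "finite Cs"
    and cliques: "\<forall>C\<in>Cs. C \<noteq> {} \<and> C \<subseteq> V"
    and Dsub: "\<forall>C\<in>Cs. D C \<subseteq> C \<rightarrow>\<^sub>E P"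
    and thnonpos: "\<forall>C\<in>Cs. \<forall>d\<in>D C. th C d \<le> 0"
    and potts: "\<forall>C\<in>Cs. \<forall>d'\<in>D C. \<forall>d''\<in>D C. d' \<noteq> d'' \<longrightarrow> (\<forall>i\<in>C. d' i \<noteq> d'' i)"
  shows "\<exists>v. (\<exists>y yC. lp_feasible V P Cs D y yC \<and> lp_obj Cs D th yC = v)
           \<and> (\<forall>y yC. lp_feasible V P Cs D y yC \<longrightarrow> v \<le> lp_obj Cs D th yC)
           \<and> (\<exists>lam. dual_fun V P Cs D th lam = v)
           \<and> (\<forall>lam. dual_fun V P Cs D th lam \<le> v)"
proof -
  interpret potts_relaxation V P Cs D th
    by unfold_locales (fact assms)+
  show ?thesis
    by (rule lp_value_eq_max_dual)
qed

end
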